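(* Let $G,G'$ be simplicial groups acting on simplicial sets $X,X'$ respectively, and assume the orbit spaces $X/G$ and $X'/G'$ are discrete. Let $\varphi\colon G\to G'$ be a homomorphism of simplicial groups and $f\colon X\to X'$ a simplicial map equivariant along $\varphi$ (i.e. $f(gx)=\varphi(g)f(x)$). If $\varphi$ is a Kan fibration, then so is $f$.
   Context: The orbit space $X/G$ is the levelwise quotient of $X$ by the $G$-action; it is discrete if it is a constant simplicial set (all degeneracies from level $0$ are bijections). *)

theory Defs
  imports "HOL-Algebra.Group"
begin

text \<open>A simplicial set is given by its sets of n-simplices (cells n), face maps
  face n i : X_n \<rightarrow> X_(n-1) (for n \<ge> 1, i \<le> n) and degeneracy maps
  degen n i : X_n \<rightarrow> X_(n+1) (for i \<le> n), satisfying the simplicial identities.\<close>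

record 'a sset =
  cells :: "nat \<Rightarrow> 'a set"
  face  :: "nat \<Rightarrow> nat \<Rightarrow> 'a \<Rightarrow> 'a"
  degen :: "nat \<Rightarrow> nat \<Rightarrow> 'a \<Rightarrow> 'a"

definition sset :: "('a, 'm) sset_scheme \<Rightarrow> bool" where
  "sset X \<longleftrightarrow>
     (\<forall>n i x. 1 \<le> n \<and> i \<le> n \<and> x \<in> cells X n \<longrightarrow> face X n i x \<in> cells X (n - 1)) \<and>
     (\<forall>n i x. i \<le> n \<and> x \<in> cells X n \<longrightarrow> degen X n i x \<in> cells X (Suc n)) \<and>
     \<comment> \<open>d_i d_j = d_(j-1) d_i for i < j\<close>
     (\<forall>n i j x. 2 \<le> n \<and> i < j \<and> j \<le> n \<and> x \<in> cells X n \<longrightarrow>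
        face X (n - 1) i (face X n j x) = face X (n - 1) (j - 1) (face X n i x)) \<and>
     \<comment> \<open>d_i s_j = s_(j-1) d_i for i < j\<close>
     (\<forall>n i j x. 1 \<le> n \<and> i < j \<and> j \<le> n \<and> x \<in> cells X n \<longrightarrow>
        face X (Suc n) i (degen X n j x) = degen X (n - 1) (j - 1) (face X n i x)) \<and>
     \<comment> \<open>d_j s_j = id = d_(j+1) s_j\<close>
     (\<forall>n j x. j \<le> n \<and> x \<in> cells X n \<longrightarrow>
        face X (Suc n) j (degen X n j x) = x \<and> face X (Suc n) (Suc j) (degen X n j x) = x) \<and>
     \<comment> \<open>d_i s_j = s_j d_(i-1) for i > j + 1\<close>
     (\<forall>n i j x. j + 1 < i \<and> i \<le> Suc n \<and> x \<in> cells X n \<longrightarrow>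
        face X (Suc n) i (degen X n j x) = degen X (n - 1) j (face X n (i - 1) x)) \<and>
     \<comment> \<open>s_i s_j = s_(j+1) s_i for i \<le> j\<close>
     (\<forall>n i j x. i \<le> j \<and> j \<le> n \<and> x \<in> cells X n \<longrightarrow>
        degen X (Suc n) i (degen X n j x) = degen X (Suc n) (Suc j) (degen X n i x))"

definition smap :: "('a, 'm) sset_scheme \<Rightarrow> ('b, 'n) sset_scheme \<Rightarrow> (nat \<Rightarrow> 'a \<Rightarrow> 'b) \<Rightarrow> bool" where
  "smap X Y f \<longleftrightarrow>
     (\<forall>n x. x \<in> cells X n \<longrightarrow> f n x \<in> cells Y n) \<and>
     (\<forall>n i x. 1 \<le> n \<and> i \<le> n \<and> x \<in> cells X n \<longrightarrow> f (n - 1) (face X n i x) = face Y n i (f n x)) \<and>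
     (\<forall>n i x. i \<le> n \<and> x \<in> cells X n \<longrightarrow> f (Suc n) (degen X n i x) = degen Y n i (f n x))"

definition sgroup :: "'g sset \<Rightarrow> (nat \<Rightarrow> 'g monoid) \<Rightarrow> bool" where
  "sgroup G grp \<longleftrightarrow> sset G \<and>
     (\<forall>n. group (grp n) \<and> carrier (grp n) = cells G n) \<and>
     (\<forall>n i. 1 \<le> n \<and> i \<le> n \<longrightarrow> face G n i \<in> hom (grp n) (grp (n - 1))) \<and>
     (\<forall>n i. i \<le> n \<longrightarrow> degen G n i \<in> hom (grp n) (grp (Suc n)))"

definition sgroup_hom :: "'g sset \<Rightarrow> (nat \<Rightarrow> 'g monoid) \<Rightarrow> 'h sset \<Rightarrow> (nat \<Rightarrow> 'h monoid)
    \<Rightarrow> (nat \<Rightarrow> 'g \<Rightarrow> 'h) \<Rightarrow> bool" where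
  "sgroup_hom G grp G' grp' \<phi> \<longleftrightarrow> smap G G' \<phi> \<and> (\<forall>n. \<phi> n \<in> hom (grp n) (grp' n))"

definition saction :: "'g sset \<Rightarrow> (nat \<Rightarrow> 'g monoid) \<Rightarrow> 'a sset \<Rightarrow> (nat \<Rightarrow> 'g \<Rightarrow> 'a \<Rightarrow> 'a) \<Rightarrow> bool" where
  "saction G grp X act \<longleftrightarrow> sgroup G grp \<and> sset X \<and>
     (\<forall>n g x. g \<in> cells G n \<and> x \<in> cells X n \<longrightarrow> act n g x \<in> cells X n) \<and>
     (\<forall>n x. x \<in> cells X n \<longrightarrow> act n \<one>\<^bsub>grp n\<^esub> x = x) \<and>
     (\<forall>n g h x. g \<in> cells G n \<and> h \<in> cells G n \<and> x \<in> cells X n \<longrightarrow>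
        act n (g \<otimes>\<^bsub>grp n\<^esub> h) x = act n g (act n h x)) \<and>
     (\<forall>n i g x. 1 \<le> n \<and> i \<le> n \<and> g \<in> cells G n \<and> x \<in> cells X n \<longrightarrow>
        face X n i (act n g x) = act (n - 1) (face G n i g) (face X n i x)) \<and>
     (\<forall>n i g x. i \<le> n \<and> g \<in> cells G n \<and> x \<in> cells X n \<longrightarrow>
        degen X n i (act n g x) = act (Suc n) (degen G n i g) (degen X n i x))"

definition orbit :: "'g sset \<Rightarrow> (nat \<Rightarrow> 'g \<Rightarrow> 'a \<Rightarrow> 'a) \<Rightarrow> nat \<Rightarrow> 'a \<Rightarrow> 'a set" where
  "orbit G act n x = {act n g x | g. g \<in> cells G n}"

definition orbits :: "'g sset \<Rightarrow> 'a sset \<Rightarrow> (nat \<Rightarrow> 'g \<Rightarrow> 'a \<Rightarrow> 'a) \<Rightarrow> nat \<Rightarrow> 'a set set" where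
  "orbits G X act n = orbit G act n ` cells X n"

fun degen_iter :: "('a, 'm) sset_scheme \<Rightarrow> nat \<Rightarrow> 'a \<Rightarrow> 'a" where
  "degen_iter X 0 x = x"
| "degen_iter X (Suc n) x = degen X n 0 (degen_iter X n x)"

text \<open>The orbit space X/G is discrete (constant) if the degeneracy
  (X/G)_0 \<rightarrow> (X/G)_n induced on orbits is a bijection for every n.\<close>

definition orbit_space_discrete :: "'g sset \<Rightarrow> 'a sset \<Rightarrow> (nat \<Rightarrow> 'g \<Rightarrow> 'a \<Rightarrow> 'a) \<Rightarrow> bool" where
  "orbit_space_discrete G X act \<longleftrightarrow>
     (\<forall>n. bij_betw (\<lambda>Orb. orbit G act n (degen_iter X n (SOME x. x \<in> Orb)))
                   (orbits G X act 0) (orbits G X act n))"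

definition kan_fibration :: "'a sset \<Rightarrow> 'b sset \<Rightarrow> (nat \<Rightarrow> 'a \<Rightarrow> 'b) \<Rightarrow> bool" where
  "kan_fibration X Y f \<longleftrightarrow> smap X Y f \<and>
     (\<forall>n k xs y. 1 \<le> n \<and> k \<le> n \<and>
        (\<forall>i\<le>n. i \<noteq> k \<longrightarrow> xs i \<in> cells X (n - 1)) \<and>
        (\<forall>i j. i < j \<and> j \<le> n \<and> i \<noteq> k \<and> j \<noteq> k \<longrightarrow>
            face X (n - 1) i (xs j) = face X (n - 1) (j - 1) (xs i)) \<and>
        y \<in> cells Y n \<and>
        (\<forall>i\<le>n. i \<noteq> k \<longrightarrow> face Y n i y = f (n - 1) (xs i))
      \<longrightarrow> (\<exists>x \<in> cells X n. f n x = y \<and> (\<forall>i\<le>n. i \<noteq> k \<longrightarrow> face X n i x = xs i)))"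

end

theory Submission
  imports Defs
begin

text \<open>Discreteness of \<open>X/G\<close> says that every simplex of \<open>X\<close> lies in the orbit of a totally
  degenerate simplex \<open>s v\<close> on a vertex \<open>v\<close>, and that \<open>s v\<close> and \<open>s w\<close> share an orbit only if
  \<open>v\<close> and \<open>w\<close> do. Hence a horn \<open>x\<^sub>i\<close> in \<open>X\<close> lies in one orbit, \<open>x\<^sub>i = a\<^sub>i \<cdot> s v\<close>, and the
  \<open>a\<^sub>i\<close> form a horn in \<open>G\<close> that is compatible modulo the stabiliser of \<open>s v\<close>. Moore's filling
  algorithm for simplicial groups, run modulo that simplicial subgroup, yields \<open>W\<close> with
  \<open>d\<^sub>i W \<cdot> s v = x\<^sub>i\<close>. Downstairs, the simplex \<open>y\<close> is written as \<open>g' \<cdot> s (f v)\<close> where,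
  after correcting \<open>g'\<close> by a filler inside the stabiliser of \<open>s (f v)\<close>, the faces of \<open>g'\<close> agree
  with those of \<open>\<phi> W\<close>. Since \<open>\<phi>\<close> is a Kan fibration, \<open>g' = \<phi> g\<close> with \<open>d\<^sub>i g = d\<^sub>i W\<close>, and
  \<open>g \<cdot> s v\<close> is the required filler.\<close>

lemma sset_face_closed:
  assumes "sset X" "i \<le> Suc p" "x \<in> cells X (Suc p)"
  shows "face X (Suc p) i x \<in> cells X p"
  using assms unfolding sset_def by (metis diff_Suc_1 le_add1 plus_1_eq_Suc)

lemma sset_degen_closed:
  assumes "sset X" "i \<le> n" "x \<in> cells X n"
  shows "degen X n i x \<in> cells X (Suc n)"
  using assms unfolding sset_def by simp

lemma sset_face_face:
  assumes "sset X" "i < j" "j \<le> Suc (Suc p)" "x \<in> cells X (Suc (Suc p))"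
  shows "face X (Suc p) i (face X (Suc (Suc p)) j x) =
    face X (Suc p) (j - 1) (face X (Suc (Suc p)) i x)"
proof -
  have "2 \<le> Suc (Suc p)" by simp
  then show ?thesis using assms unfolding sset_def by (metis diff_Suc_1)
qed

lemma sset_face_degen_less:
  assumes "sset X" "i < j" "j \<le> Suc p" "x \<in> cells X (Suc p)"
  shows "face X (Suc (Suc p)) i (degen X (Suc p) j x) = degen X p (j - 1) (face X (Suc p) i x)"
  using assms unfolding sset_def by (metis diff_Suc_1 le_add1 plus_1_eq_Suc)

lemma sset_face_degen_eq:
  assumes "sset X" "j \<le> n" "x \<in> cells X n"
  shows "face X (Suc n) j (degen X n j x) = x" "face X (Suc n) (Suc j) (degen X n j x) = x"
  using assms unfolding sset_def by simp_all

lemma sset_face_degen_greater: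
  assumes "sset X" "Suc j < i" "i \<le> Suc (Suc p)" "x \<in> cells X (Suc p)"
  shows "face X (Suc (Suc p)) i (degen X (Suc p) j x) = degen X p j (face X (Suc p) (i - 1) x)"
  using assms unfolding sset_def by (metis Suc_eq_plus1 diff_Suc_1)

lemma sset_degen_degen:
  assumes "sset X" "i \<le> j" "j \<le> n" "x \<in> cells X n"
  shows "degen X (Suc n) i (degen X n j x) = degen X (Suc n) (Suc j) (degen X n i x)"
  using assms unfolding sset_def by simp

lemma sset_faces_compatible:
  assumes "sset X" "x \<in> cells X (Suc m)" "k \<le> Suc m" "i < j" "j \<le> Suc m" "i \<noteq> k" "j \<noteq> k"
  shows "face X m i (face X (Suc m) j x) = face X m (j - 1) (face X (Suc m) i x)"
proof -
  obtain p where "m = Suc p" using assms(3-7) by (cases m) auto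
  then show ?thesis using sset_face_face[OF assms(1,4)] assms(2,5) by simp
qed

lemma smap_cells:
  assumes "smap X Y f" "x \<in> cells X n"
  shows "f n x \<in> cells Y n"
  using assms unfolding smap_def by simp

lemma smap_face:
  assumes "smap X Y f" "i \<le> Suc p" "x \<in> cells X (Suc p)"
  shows "f p (face X (Suc p) i x) = face Y (Suc p) i (f (Suc p) x)"
  using assms unfolding smap_def by (metis diff_Suc_1 le_add1 plus_1_eq_Suc)

lemma smap_degen:
  assumes "smap X Y f" "i \<le> n" "x \<in> cells X n"
  shows "f (Suc n) (degen X n i x) = degen Y n i (f n x)"
  using assms unfolding smap_def by simp

lemma (in group) inv_mult_same_coset_mem:
  assumes "subgroup S G" "c \<in> carrier G" "h1 \<in> S" "h2 \<in> S"
  shows "inv (c \<otimes> h1) \<otimes> (c \<otimes> h2) \<in> S"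
proof -
  have "h1 \<in> carrier G" "h2 \<in> carrier G" using assms subgroup.mem_carrier by force+
  then have "inv (c \<otimes> h1) \<otimes> (c \<otimes> h2) = inv h1 \<otimes> h2"
    using assms(2) by (simp add: inv_mult_group m_assoc flip: m_assoc[of "inv c"])
  then show ?thesis using assms by (simp add: subgroup.m_closed subgroup.m_inv_closed)
qed

definition simplicial_subgroup :: "'g sset \<Rightarrow> (nat \<Rightarrow> 'g monoid) \<Rightarrow> (nat \<Rightarrow> 'g set) \<Rightarrow> bool" where
  "simplicial_subgroup G grp K \<longleftrightarrow> (\<forall>n. subgroup (K n) (grp n)) \<and>
     (\<forall>p i x. i \<le> Suc p \<and> x \<in> K (Suc p) \<longrightarrow> face G (Suc p) i x \<in> K p) \<and>
     (\<forall>n i x. i \<le> n \<and> x \<in> K n \<longrightarrow> degen G n i x \<in> K (Suc n))"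

locale simplicial_group =
  fixes G :: "'g sset" and grp :: "nat \<Rightarrow> 'g monoid"
  assumes sgroup: "sgroup G grp"
begin

lemma is_sset: "sset G"
  using sgroup unfolding sgroup_def by blast

lemma is_group: "group (grp n)"
  using sgroup unfolding sgroup_def by blast

lemma carrier_grp [simp]: "carrier (grp n) = cells G n"
  using sgroup unfolding sgroup_def by blast

lemma mult_closed [simp]: "x \<in> cells G n \<Longrightarrow> y \<in> cells G n \<Longrightarrow> x \<otimes>\<^bsub>grp n\<^esub> y \<in> cells G n"
  using group.is_monoid[OF is_group] monoid.m_closed by fastforce

lemma inv_closed [simp]: "x \<in> cells G n \<Longrightarrow> inv\<^bsub>grp n\<^esub> x \<in> cells G n"
  using group.inv_closed[OF is_group] by fastforce

lemma one_closed [simp]: "\<one>\<^bsub>grp n\<^esub> \<in> cells G n"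
  using group.is_monoid[OF is_group] monoid.one_closed by fastforce

lemma face_closed: "i \<le> Suc p \<Longrightarrow> x \<in> cells G (Suc p) \<Longrightarrow> face G (Suc p) i x \<in> cells G p"
  using sset_face_closed[OF is_sset] .

lemma face_group_hom:
  assumes "i \<le> Suc p"
  shows "group_hom (grp (Suc p)) (grp p) (face G (Suc p) i)"
proof -
  have "face G (Suc p) i \<in> hom (grp (Suc p)) (grp p)"
    using sgroup assms unfolding sgroup_def by (metis diff_Suc_1 le_add1 plus_1_eq_Suc)
  then show ?thesis by (simp add: group_hom_def group_hom_axioms_def is_group)
qed

lemma degen_group_hom: "i \<le> n \<Longrightarrow> group_hom (grp n) (grp (Suc n)) (degen G n i)"
  using sgroup unfolding sgroup_def by (simp add: group_hom_def group_hom_axioms_def)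

lemma face_mult:
  "i \<le> Suc p \<Longrightarrow> x \<in> cells G (Suc p) \<Longrightarrow> y \<in> cells G (Suc p) \<Longrightarrow>
    face G (Suc p) i (x \<otimes>\<^bsub>grp (Suc p)\<^esub> y) = face G (Suc p) i x \<otimes>\<^bsub>grp p\<^esub> face G (Suc p) i y"
  using group_hom.hom_mult[OF face_group_hom] by simp

lemma face_inv:
  "i \<le> Suc p \<Longrightarrow> x \<in> cells G (Suc p) \<Longrightarrow>
    face G (Suc p) i (inv\<^bsub>grp (Suc p)\<^esub> x) = inv\<^bsub>grp p\<^esub> face G (Suc p) i x"
  using group_hom.hom_inv[OF face_group_hom] by simp

lemma face_one: "i \<le> Suc p \<Longrightarrow> face G (Suc p) i \<one>\<^bsub>grp (Suc p)\<^esub> = \<one>\<^bsub>grp p\<^esub>"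
  using group_hom.hom_one[OF face_group_hom] .

lemma degen_one: "i \<le> n \<Longrightarrow> degen G n i \<one>\<^bsub>grp n\<^esub> = \<one>\<^bsub>grp (Suc n)\<^esub>"
  using group_hom.hom_one[OF degen_group_hom] .

lemma simplicial_subgroup_subgroup: "simplicial_subgroup G grp K \<Longrightarrow> subgroup (K n) (grp n)"
  unfolding simplicial_subgroup_def by blast

lemma simplicial_subgroup_cells: "simplicial_subgroup G grp K \<Longrightarrow> x \<in> K n \<Longrightarrow> x \<in> cells G n"
  using subgroup.subset[OF simplicial_subgroup_subgroup] by fastforce

lemma simplicial_subgroup_mult:
  "simplicial_subgroup G grp K \<Longrightarrow> x \<in> K n \<Longrightarrow> y \<in> K n \<Longrightarrow> x \<otimes>\<^bsub>grp n\<^esub> y \<in> K n"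
  using subgroup.m_closed[OF simplicial_subgroup_subgroup] .

lemma simplicial_subgroup_inv: "simplicial_subgroup G grp K \<Longrightarrow> x \<in> K n \<Longrightarrow> inv\<^bsub>grp n\<^esub> x \<in> K n"
  using group.subgroupE(3)[OF is_group simplicial_subgroup_subgroup] .

lemma simplicial_subgroup_one: "simplicial_subgroup G grp K \<Longrightarrow> \<one>\<^bsub>grp n\<^esub> \<in> K n"
  using subgroup.one_closed[OF simplicial_subgroup_subgroup] .

lemma simplicial_subgroup_face:
  "simplicial_subgroup G grp K \<Longrightarrow> i \<le> Suc p \<Longrightarrow> x \<in> K (Suc p) \<Longrightarrow> face G (Suc p) i x \<in> K p"
  unfolding simplicial_subgroup_def by blast

lemma simplicial_subgroup_degen:
  "simplicial_subgroup G grp K \<Longrightarrow> i \<le> n \<Longrightarrow> x \<in> K n \<Longrightarrow> degen G n i x \<in> K (Suc n)"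
  unfolding simplicial_subgroup_def by blast

lemma simplicial_subgroup_cells_self: "simplicial_subgroup G grp (cells G)"
  unfolding simplicial_subgroup_def
  using group.subgroup_self[OF is_group] sset_face_closed[OF is_sset] sset_degen_closed[OF is_sset]
  by (metis carrier_grp)

lemma simplicial_subgroup_trivial: "simplicial_subgroup G grp (\<lambda>n. {\<one>\<^bsub>grp n\<^esub>})"
  unfolding simplicial_subgroup_def using group.triv_subgroup[OF is_group] face_one degen_one by simp

end

text \<open>Moore's algorithm relative to a simplicial subgroup \<open>H\<close>: the faces \<open>a\<^sub>i\<close> of the horn
  need only be compatible modulo \<open>H\<close>, and the filler \<open>w\<close> satisfies \<open>d\<^sub>i w \<in> a\<^sub>i H\<close>. The faces
  are matched one at a time, upwards below \<open>k\<close> and downwards above it: \<open>w\<close> is replaced by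
  \<open>w \<cdot> s\<^sub>q u\<close> with \<open>u = (d\<^sub>r w)\<^sup>-\<^sup>1 a\<^sub>r\<close> and \<open>q \<in> {r, r - 1}\<close>, so that \<open>d\<^sub>r (s\<^sub>q u) = u\<close>,
  while the faces matched earlier change only by elements of \<open>H\<close>.\<close>

locale relative_horn = simplicial_group +
  fixes K H :: "nat \<Rightarrow> 'g set" and a :: "nat \<Rightarrow> 'g" and m k :: nat
  assumes K: "simplicial_subgroup G grp K" and H: "simplicial_subgroup G grp H"
    and k: "k \<le> Suc m"
    and horn_in_K: "\<And>i. i \<le> Suc m \<Longrightarrow> i \<noteq> k \<Longrightarrow> a i \<in> K m"
    and horn_compatible: "\<And>i j. i < j \<Longrightarrow> j \<le> Suc m \<Longrightarrow> i \<noteq> k \<Longrightarrow> j \<noteq> k \<Longrightarrow>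
        \<exists>h\<in>H (m - 1). face G m (j - 1) (a i) = face G m i (a j) \<otimes>\<^bsub>grp (m - 1)\<^esub> h"
begin

definition matches :: "nat \<Rightarrow> 'g \<Rightarrow> bool" where
  "matches i w \<longleftrightarrow> (\<exists>h\<in>H m. face G (Suc m) i w = a i \<otimes>\<^bsub>grp m\<^esub> h)"

lemma horn_cells: "i \<le> Suc m \<Longrightarrow> i \<noteq> k \<Longrightarrow> a i \<in> cells G m"
  using simplicial_subgroup_cells[OF K horn_in_K] .

lemma correction_in_K:
  assumes "w \<in> K (Suc m)" "r \<le> Suc m" "r \<noteq> k"
  shows "inv\<^bsub>grp m\<^esub> (face G (Suc m) r w) \<otimes>\<^bsub>grp m\<^esub> a r \<in> K m"
  using assms
  by (meson K horn_in_K simplicial_subgroup_face simplicial_subgroup_inv simplicial_subgroup_mult)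

lemma correction_face_below:
  assumes m: "m = Suc p" and w: "w \<in> K (Suc m)" and ir: "i < r" "r \<le> Suc m" "i \<noteq> k" "r \<noteq> k"
    and match: "matches i w"
  shows "face G m i (inv\<^bsub>grp m\<^esub> (face G (Suc m) r w) \<otimes>\<^bsub>grp m\<^esub> a r) \<in> H p"
proof -
  interpret grp_p: group "grp p" using is_group .
  obtain h where h: "h \<in> H m" "face G (Suc m) i w = a i \<otimes>\<^bsub>grp m\<^esub> h"
    using match unfolding matches_def by blast
  obtain h' where h': "h' \<in> H p" "face G m (r - 1) (a i) = face G m i (a r) \<otimes>\<^bsub>grp p\<^esub> h'"
    using horn_compatible[OF ir] m by auto
  have cells: "a i \<in> cells G m" "a r \<in> cells G m" "w \<in> cells G (Suc m)" "h \<in> cells G m"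
    "h' \<in> cells G p" "face G m (r - 1) h \<in> cells G p" "face G m i (a r) \<in> cells G p"
    using ir horn_cells simplicial_subgroup_cells[OF K w] simplicial_subgroup_cells[OF H] h h'
      face_closed m by auto
  have "face G m i (face G (Suc m) r w) = face G m (r - 1) (face G (Suc m) i w)"
    using sset_face_face[OF is_sset] ir cells m by simp
  also have "\<dots> = (face G m i (a r) \<otimes>\<^bsub>grp p\<^esub> h') \<otimes>\<^bsub>grp p\<^esub> face G m (r - 1) h"
    using h(2) h'(2) face_mult ir cells m by auto
  also have "\<dots> = face G m i (a r) \<otimes>\<^bsub>grp p\<^esub> (h' \<otimes>\<^bsub>grp p\<^esub> face G m (r - 1) h)"
    using cells by (simp add: grp_p.m_assoc)
  finally have "face G m i (inv\<^bsub>grp m\<^esub> (face G (Suc m) r w) \<otimes>\<^bsub>grp m\<^esub> a r)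
      = inv\<^bsub>grp p\<^esub> (face G m i (a r) \<otimes>\<^bsub>grp p\<^esub> (h' \<otimes>\<^bsub>grp p\<^esub> face G m (r - 1) h))
        \<otimes>\<^bsub>grp p\<^esub> (face G m i (a r) \<otimes>\<^bsub>grp p\<^esub> \<one>\<^bsub>grp p\<^esub>)"
    using face_mult face_inv face_closed ir cells m by auto
  also have "\<dots> \<in> H p"
    by (rule grp_p.inv_mult_same_coset_mem[OF simplicial_subgroup_subgroup[OF H]])
      (use cells(7) simplicial_subgroup_mult[OF H h'(1)]
        simplicial_subgroup_face[OF H _ h(1)[unfolded m]] simplicial_subgroup_one[OF H] ir m in auto)
  finally show ?thesis .
qed

lemma correction_face_above:
  assumes m: "m = Suc p" and w: "w \<in> K (Suc m)" and ri: "r < i" "i \<le> Suc m" "i \<noteq> k" "r \<noteq> k"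
    and match: "matches i w"
  shows "face G m (i - 1) (inv\<^bsub>grp m\<^esub> (face G (Suc m) r w) \<otimes>\<^bsub>grp m\<^esub> a r) \<in> H p"
proof -
  obtain h where h: "h \<in> H m" "face G (Suc m) i w = a i \<otimes>\<^bsub>grp m\<^esub> h"
    using match unfolding matches_def by blast
  obtain h' where h': "h' \<in> H p" "face G m (i - 1) (a r) = face G m r (a i) \<otimes>\<^bsub>grp p\<^esub> h'"
    using horn_compatible[OF ri(1,2,4,3)] m by auto
  have cells: "a i \<in> cells G m" "a r \<in> cells G m" "w \<in> cells G (Suc m)" "h \<in> cells G m"
    "face G m r (a i) \<in> cells G p"
    using ri horn_cells simplicial_subgroup_cells[OF K w] simplicial_subgroup_cells[OF H] h
      face_closed m by auto
  have "face G m (i - 1) (face G (Suc m) r w) = face G m r (face G (Suc m) i w)"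
    using sset_face_face[OF is_sset] ri cells m by simp
  also have "\<dots> = face G m r (a i) \<otimes>\<^bsub>grp p\<^esub> face G m r h"
    using h(2) face_mult ri cells m by auto
  finally have "face G m (i - 1) (inv\<^bsub>grp m\<^esub> (face G (Suc m) r w) \<otimes>\<^bsub>grp m\<^esub> a r)
      = inv\<^bsub>grp p\<^esub> (face G m r (a i) \<otimes>\<^bsub>grp p\<^esub> face G m r h)
        \<otimes>\<^bsub>grp p\<^esub> (face G m r (a i) \<otimes>\<^bsub>grp p\<^esub> h')"
    using h'(2) face_mult face_inv face_closed ri cells m by auto
  also have "\<dots> \<in> H p"
    by (rule group.inv_mult_same_coset_mem[OF is_group simplicial_subgroup_subgroup[OF H]])
      (use cells(5) simplicial_subgroup_face[OF H _ h(1)[unfolded m]] h'(1) ri m in auto)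
  finally show ?thesis .
qed

lemma degenerate_correction_face:
  assumes w: "w \<in> K (Suc m)" and r: "r \<le> Suc m" "r \<noteq> k" and q: "q \<le> m" "r = q \<or> r = Suc q"
    and i: "i < q \<or> Suc q < i" "i \<le> Suc m" "i \<noteq> k" "matches i w"
  shows "face G (Suc m) i (degen G m q (inv\<^bsub>grp m\<^esub> (face G (Suc m) r w) \<otimes>\<^bsub>grp m\<^esub> a r)) \<in> H m"
    (is "face G (Suc m) i (degen G m q ?u) \<in> H m")
proof -
  have u: "?u \<in> cells G m" using simplicial_subgroup_cells[OF K correction_in_K[OF w r]] .
  show ?thesis
  proof (cases "i < q")
    case True
    then obtain p where m: "m = Suc p" using q(1) by (cases m) auto
    have "face G (Suc m) i (degen G m q ?u) = degen G p (q - 1) (face G m i ?u)"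
      using sset_face_degen_less[OF is_sset True] q(1) u m by simp
    moreover have "face G m i ?u \<in> H p"
      using correction_face_below[OF m w _ r(1) _ r(2)] i True q(2) by auto
    ultimately show ?thesis using simplicial_subgroup_degen[OF H] True q m by simp
  next
    case False
    then have qi: "Suc q < i" using i by simp
    then obtain p where m: "m = Suc p" using i by (cases m) auto
    have "face G (Suc m) i (degen G m q ?u) = degen G p q (face G m (i - 1) ?u)"
      using sset_face_degen_greater[OF is_sset qi] i u m by simp
    moreover have "face G m (i - 1) ?u \<in> H p"
      using correction_face_above[OF m w _ _ _ r(2)] i qi q(2) by auto
    ultimately show ?thesis using simplicial_subgroup_degen[OF H] qi i m by simp
  qed
qed

lemma match_one_more:
  assumes w: "w \<in> K (Suc m)" and r: "r \<le> Suc m" "r \<noteq> k" and q: "q \<le> m" "r = q \<or> r = Suc q"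
    and S: "\<And>i. i \<in> S \<Longrightarrow> (i < q \<or> Suc q < i) \<and> i \<le> Suc m \<and> i \<noteq> k \<and> matches i w"
  shows "\<exists>w'\<in>K (Suc m). matches r w' \<and> (\<forall>i\<in>S. matches i w')"
proof -
  interpret grp_m: group "grp m" using is_group .
  define u where "u = inv\<^bsub>grp m\<^esub> (face G (Suc m) r w) \<otimes>\<^bsub>grp m\<^esub> a r"
  have u: "u \<in> K m" unfolding u_def using correction_in_K[OF w r] .
  define w' where "w' = w \<otimes>\<^bsub>grp (Suc m)\<^esub> degen G m q u"
  have w': "w' \<in> K (Suc m)"
    unfolding w'_def using simplicial_subgroup_mult[OF K w simplicial_subgroup_degen[OF K q(1) u]] .
  have cells: "w \<in> cells G (Suc m)" "u \<in> cells G m" "degen G m q u \<in> cells G (Suc m)"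
    using w u simplicial_subgroup_cells[OF K] simplicial_subgroup_degen[OF K q(1)] by blast+
  have face_w': "face G (Suc m) i w' = face G (Suc m) i w \<otimes>\<^bsub>grp m\<^esub> face G (Suc m) i (degen G m q u)"
    if "i \<le> Suc m" for i
    unfolding w'_def using face_mult[OF that cells(1,3)] .
  have "face G (Suc m) r w' = face G (Suc m) r w \<otimes>\<^bsub>grp m\<^esub> u"
    using face_w'[OF r(1)] sset_face_degen_eq[OF is_sset q(1) cells(2)] q(2) by auto
  also have "\<dots> = a r \<otimes>\<^bsub>grp m\<^esub> \<one>\<^bsub>grp m\<^esub>"
    unfolding u_def using r cells(1) face_closed horn_cells by (simp add: grp_m.m_assoc[symmetric])
  finally have "matches r w'"
    unfolding matches_def using simplicial_subgroup_one[OF H] by blast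
  moreover have "matches i w'" if i: "i \<in> S" for i
  proof -
    obtain h where h: "h \<in> H m" "face G (Suc m) i w = a i \<otimes>\<^bsub>grp m\<^esub> h"
      using S[OF i] unfolding matches_def by blast
    have d: "face G (Suc m) i (degen G m q u) \<in> H m"
      unfolding u_def using degenerate_correction_face[OF w r q] S[OF i] by blast
    have "face G (Suc m) i w' = a i \<otimes>\<^bsub>grp m\<^esub> (h \<otimes>\<^bsub>grp m\<^esub> face G (Suc m) i (degen G m q u))"
      using face_w' h S[OF i] horn_cells simplicial_subgroup_cells[OF H] d
      by (simp add: grp_m.m_assoc)
    then show ?thesis
      unfolding matches_def using simplicial_subgroup_mult[OF H h(1) d] by blast
  qed
  ultimately show ?thesis using w' by blast
qed

lemma matches_below:
  "r \<le> k \<Longrightarrow> \<exists>w\<in>K (Suc m). \<forall>i<r. matches i w"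
proof (induction r)
  case 0
  show ?case using simplicial_subgroup_one[OF K] by blast
next
  case (Suc r)
  then obtain w where w: "w \<in> K (Suc m)" "\<forall>i<r. matches i w" by auto
  have "\<exists>w'\<in>K (Suc m). matches r w' \<and> (\<forall>i\<in>{..<r}. matches i w')"
    by (rule match_one_more[OF w(1), where q = r]) (use w(2) Suc.prems k in auto)
  then show ?case by (auto simp: less_Suc_eq)
qed

lemma matches_below_and_top:
  "d \<le> Suc m - k \<Longrightarrow>
    \<exists>w\<in>K (Suc m). (\<forall>i<k. matches i w) \<and> (\<forall>i. Suc m - d < i \<and> i \<le> Suc m \<longrightarrow> matches i w)"
proof (induction d)
  case 0
  show ?case using matches_below[of k] by auto
next
  case (Suc d)
  then obtain w where w: "w \<in> K (Suc m)" "\<forall>i<k. matches i w"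
    "\<forall>i. Suc m - d < i \<and> i \<le> Suc m \<longrightarrow> matches i w"
    by auto
  have "\<exists>w'\<in>K (Suc m). matches (Suc m - d) w' \<and>
      (\<forall>i\<in>{i. i < k} \<union> {i. Suc m - d < i \<and> i \<le> Suc m}. matches i w')"
    by (rule match_one_more[OF w(1), where q = "m - d"]) (use w(2,3) Suc.prems in auto)
  moreover have "Suc m - Suc d < i \<longleftrightarrow> Suc m - d = i \<or> Suc m - d < i" for i
    using Suc.prems by auto
  ultimately show ?case by auto
qed

lemma filler: "\<exists>w\<in>K (Suc m). \<forall>i\<le>Suc m. i \<noteq> k \<longrightarrow> matches i w"
proof -
  obtain w where "w \<in> K (Suc m)" "\<forall>i<k. matches i w" "\<forall>i. k < i \<and> i \<le> Suc m \<longrightarrow> matches i w"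
    using matches_below_and_top[of "Suc m - k"] k by auto
  then show ?thesis by (metis linorder_neqE_nat)
qed

end

lemma (in simplicial_group) relative_horn_filler:
  assumes "simplicial_subgroup G grp K" "simplicial_subgroup G grp H" "k \<le> Suc m"
    "\<And>i. i \<le> Suc m \<Longrightarrow> i \<noteq> k \<Longrightarrow> a i \<in> K m"
    "\<And>i j. i < j \<Longrightarrow> j \<le> Suc m \<Longrightarrow> i \<noteq> k \<Longrightarrow> j \<noteq> k \<Longrightarrow>
        \<exists>h\<in>H (m - 1). face G m (j - 1) (a i) = face G m i (a j) \<otimes>\<^bsub>grp (m - 1)\<^esub> h"
  shows "\<exists>w\<in>K (Suc m). \<forall>i\<le>Suc m. i \<noteq> k \<longrightarrow> (\<exists>h\<in>H m. face G (Suc m) i w = a i \<otimes>\<^bsub>grp m\<^esub> h)"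
proof -
  interpret relative_horn G grp K H a m k
    using assms by unfold_locales
  show ?thesis using filler unfolding matches_def .
qed

lemma degen_iter_closed:
  assumes "sset X" "v \<in> cells X 0"
  shows "degen_iter X n v \<in> cells X n"
  by (induction n) (simp_all add: assms sset_degen_closed[OF assms(1)])

lemma face_degen_iter:
  assumes "sset X" "v \<in> cells X 0" "i \<le> Suc n"
  shows "face X (Suc n) i (degen_iter X (Suc n) v) = degen_iter X n v"
  using assms(3)
proof (induction n arbitrary: i)
  case 0
  then show ?case using sset_face_degen_eq[OF assms(1) _ assms(2)] by (auto simp: le_Suc_eq)
next
  case (Suc n)
  have v: "degen_iter X (Suc n) v \<in> cells X (Suc n)" using degen_iter_closed[OF assms(1,2)] .
  consider "i = 0" | "i = 1" | "1 < i" by linarith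
  then show ?case
  proof cases
    case 3
    then have "face X (Suc (Suc n)) i (degen X (Suc n) 0 (degen_iter X (Suc n) v)) =
        degen X n 0 (face X (Suc n) (i - 1) (degen_iter X (Suc n) v))"
      using sset_face_degen_greater[OF assms(1) _ _ v] Suc.prems by simp
    then show ?thesis using Suc.IH[of "i - 1"] Suc.prems by simp
  qed (use sset_face_degen_eq[OF assms(1) _ v] in auto)
qed

lemma degen_degen_iter:
  assumes "sset X" "v \<in> cells X 0" "j \<le> n"
  shows "degen X n j (degen_iter X n v) = degen_iter X (Suc n) v"
  using assms(3)
proof (induction n arbitrary: j)
  case (Suc n)
  show ?case
  proof (cases j)
    case (Suc j')
    then have "degen X (Suc n) j (degen_iter X (Suc n) v) =
        degen X (Suc n) 0 (degen X n j' (degen_iter X n v))"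
      using sset_degen_degen[OF assms(1) _ _ degen_iter_closed[OF assms(1,2)], of 0 j' n] Suc.prems
      by simp
    then show ?thesis using Suc.IH[of j'] Suc.prems \<open>j = Suc j'\<close> by simp
  qed simp
qed simp

lemma smap_degen_iter:
  assumes "smap X Y f" "sset X" "v \<in> cells X 0"
  shows "f n (degen_iter X n v) = degen_iter Y n (f 0 v)"
  by (induction n) (simp_all add: smap_degen[OF assms(1)] degen_iter_closed[OF assms(2,3)])

locale simplicial_action =
  fixes G :: "'g sset" and grp :: "nat \<Rightarrow> 'g monoid"
    and X :: "'a sset" and act :: "nat \<Rightarrow> 'g \<Rightarrow> 'a \<Rightarrow> 'a"
  assumes saction: "saction G grp X act"

sublocale simplicial_action \<subseteq> simplicial_group G grp
  using saction unfolding saction_def by unfold_locales simp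

context simplicial_action
begin

lemma sset_X: "sset X"
  using saction unfolding saction_def by simp

lemma act_closed: "g \<in> cells G n \<Longrightarrow> x \<in> cells X n \<Longrightarrow> act n g x \<in> cells X n"
  using saction unfolding saction_def by simp

lemma act_one: "x \<in> cells X n \<Longrightarrow> act n \<one>\<^bsub>grp n\<^esub> x = x"
  using saction unfolding saction_def by simp

lemma act_mult:
  "g \<in> cells G n \<Longrightarrow> h \<in> cells G n \<Longrightarrow> x \<in> cells X n \<Longrightarrow>
    act n (g \<otimes>\<^bsub>grp n\<^esub> h) x = act n g (act n h x)"
  using saction unfolding saction_def by simp

lemma act_face:
  "i \<le> Suc p \<Longrightarrow> g \<in> cells G (Suc p) \<Longrightarrow> x \<in> cells X (Suc p) \<Longrightarrow>
    face X (Suc p) i (act (Suc p) g x) = act p (face G (Suc p) i g) (face X (Suc p) i x)"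
  using saction unfolding saction_def by (metis diff_Suc_1 le_add1 plus_1_eq_Suc)

lemma act_degen:
  "i \<le> n \<Longrightarrow> g \<in> cells G n \<Longrightarrow> x \<in> cells X n \<Longrightarrow>
    degen X n i (act n g x) = act (Suc n) (degen G n i g) (degen X n i x)"
  using saction unfolding saction_def by simp

lemma act_inv_act: "g \<in> cells G n \<Longrightarrow> x \<in> cells X n \<Longrightarrow> act n (inv\<^bsub>grp n\<^esub> g) (act n g x) = x"
  using act_mult[symmetric] group.l_inv[OF is_group] act_one by fastforce

lemma degen_iter_act:
  assumes "g \<in> cells G 0" "v \<in> cells X 0"
  shows "degen_iter X n (act 0 g v) = act n (degen_iter G n g) (degen_iter X n v)"
  by (induction n)
    (use assms act_degen degen_iter_closed[OF is_sset] degen_iter_closed[OF sset_X] in auto)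

lemma face_act_degen_iter:
  assumes "i \<le> Suc p" "g \<in> cells G (Suc p)" "v \<in> cells X 0"
  shows "face X (Suc p) i (act (Suc p) g (degen_iter X (Suc p) v)) =
    act p (face G (Suc p) i g) (degen_iter X p v)"
  using act_face[OF assms(1,2) degen_iter_closed[OF sset_X assms(3)]]
    face_degen_iter[OF sset_X assms(3,1)]
  by simp

lemma mem_orbit_self:
  assumes "x \<in> cells X n"
  shows "x \<in> orbit G act n x"
  unfolding orbit_def using act_one[OF assms] one_closed by (metis (mono_tags, lifting) CollectI)

lemma orbit_act:
  assumes "g \<in> cells G n" "x \<in> cells X n"
  shows "orbit G act n (act n g x) = orbit G act n x"
proof -
  have "act n h (act n g x) = act n (h \<otimes>\<^bsub>grp n\<^esub> g) x" if "h \<in> cells G n" for h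
    using act_mult that assms by simp
  moreover have "act n h x = act n (h \<otimes>\<^bsub>grp n\<^esub> inv\<^bsub>grp n\<^esub> g) (act n g x)" if "h \<in> cells G n" for h
    using act_mult act_inv_act act_closed that assms by simp
  ultimately show ?thesis
    unfolding orbit_def using assms mult_closed inv_closed by blast
qed

lemma orbit_eq:
  assumes "y \<in> orbit G act n x" "x \<in> cells X n"
  shows "orbit G act n y = orbit G act n x"
proof -
  obtain g where "g \<in> cells G n" "y = act n g x" using assms(1) unfolding orbit_def by blast
  then show ?thesis using orbit_act assms(2) by simp
qed

lemma orbit_degen_iter_eq:
  assumes "u \<in> orbit G act 0 v" "v \<in> cells X 0"
  shows "orbit G act n (degen_iter X n u) = orbit G act n (degen_iter X n v)"
proof -
  obtain c where "c \<in> cells G 0" "u = act 0 c v" using assms(1) unfolding orbit_def by blast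
  then show ?thesis
    using degen_iter_act orbit_act degen_iter_closed[OF is_sset] degen_iter_closed[OF sset_X] assms(2)
    by simp
qed

lemma face_orbit_degen_iter:
  assumes "x \<in> orbit G act (Suc p) (degen_iter X (Suc p) v)" "i \<le> Suc p" "v \<in> cells X 0"
  shows "face X (Suc p) i x \<in> orbit G act p (degen_iter X p v)"
  using assms face_act_degen_iter face_closed unfolding orbit_def by blast

end

definition vertex_stabilizer ::
    "'g sset \<Rightarrow> (nat \<Rightarrow> 'g \<Rightarrow> 'a \<Rightarrow> 'a) \<Rightarrow> 'a sset \<Rightarrow> 'a \<Rightarrow> nat \<Rightarrow> 'g set"
  where "vertex_stabilizer G act X v n = {h \<in> cells G n. act n h (degen_iter X n v) = degen_iter X n v}"

lemma (in simplicial_action) simplicial_subgroup_vertex_stabilizer: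
  assumes v: "v \<in> cells X 0"
  shows "simplicial_subgroup G grp (vertex_stabilizer G act X v)"
proof -
  have v_n: "degen_iter X n v \<in> cells X n" for n using degen_iter_closed[OF sset_X v] .
  have "subgroup (vertex_stabilizer G act X v n) (grp n)" for n
  proof (rule group.subgroupI[OF is_group])
    show "vertex_stabilizer G act X v n \<noteq> {}"
      unfolding vertex_stabilizer_def using act_one[OF v_n] one_closed by blast
    show "inv\<^bsub>grp n\<^esub> h \<in> vertex_stabilizer G act X v n" if "h \<in> vertex_stabilizer G act X v n" for h
      using that act_inv_act[OF _ v_n, of h n] unfolding vertex_stabilizer_def by auto
    show "g \<otimes>\<^bsub>grp n\<^esub> h \<in> vertex_stabilizer G act X v n"
      if "g \<in> vertex_stabilizer G act X v n" "h \<in> vertex_stabilizer G act X v n" for g h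
      using that act_mult[OF _ _ v_n] unfolding vertex_stabilizer_def by auto
  qed (auto simp: vertex_stabilizer_def)
  moreover have "face G (Suc p) i h \<in> vertex_stabilizer G act X v p"
    if "i \<le> Suc p" "h \<in> vertex_stabilizer G act X v (Suc p)" for p i h
    using that face_act_degen_iter[OF _ _ v, of i p h] face_degen_iter[OF sset_X v, of i p] face_closed
    unfolding vertex_stabilizer_def by auto
  moreover have "degen G n i h \<in> vertex_stabilizer G act X v (Suc n)"
    if "i \<le> n" "h \<in> vertex_stabilizer G act X v n" for n i h
    using that act_degen[OF _ _ v_n, of i n h] degen_degen_iter[OF sset_X v, of i n]
      sset_degen_closed[OF is_sset]
    unfolding vertex_stabilizer_def by auto
  ultimately show ?thesis unfolding simplicial_subgroup_def by blast
qed

lemma (in simplicial_action) horn_lift_to_group: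
  assumes k: "k \<le> Suc m" and v: "v \<in> cells X 0"
    and horn: "\<And>i. i \<le> Suc m \<Longrightarrow> i \<noteq> k \<Longrightarrow> xs i \<in> orbit G act m (degen_iter X m v)"
    and compat: "\<And>i j. i < j \<Longrightarrow> j \<le> Suc m \<Longrightarrow> i \<noteq> k \<Longrightarrow> j \<noteq> k \<Longrightarrow>
        face X m i (xs j) = face X m (j - 1) (xs i)"
  shows "\<exists>W\<in>cells G (Suc m). \<forall>i\<le>Suc m. i \<noteq> k \<longrightarrow> act m (face G (Suc m) i W) (degen_iter X m v) = xs i"
proof -
  let ?S = "vertex_stabilizer G act X v"
  have "\<forall>i. \<exists>g. i \<le> Suc m \<and> i \<noteq> k \<longrightarrow> g \<in> cells G m \<and> xs i = act m g (degen_iter X m v)"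
    using horn unfolding orbit_def by blast
  then obtain a where a: "\<And>i. i \<le> Suc m \<Longrightarrow> i \<noteq> k \<Longrightarrow> a i \<in> cells G m"
    "\<And>i. i \<le> Suc m \<Longrightarrow> i \<noteq> k \<Longrightarrow> xs i = act m (a i) (degen_iter X m v)"
    by metis
  have v_n: "degen_iter X n v \<in> cells X n" for n using degen_iter_closed[OF sset_X v] .
  have "\<exists>h\<in>?S (m - 1). face G m (j - 1) (a i) = face G m i (a j) \<otimes>\<^bsub>grp (m - 1)\<^esub> h"
    if ij: "i < j" "j \<le> Suc m" "i \<noteq> k" "j \<noteq> k" for i j
  proof -
    obtain p where m: "m = Suc p" using ij k by (cases m) auto
    interpret grp_p: group "grp p" using is_group .
    define c where "c = face G m i (a j)"
    define c' where "c' = face G m (j - 1) (a i)"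
    have c: "c \<in> cells G p" "c' \<in> cells G p"
      unfolding c_def c'_def using face_closed a(1) ij m by auto
    have "act p c' (degen_iter X p v) = face X m (j - 1) (xs i)"
      unfolding c'_def using face_act_degen_iter[OF _ _ v] a ij m by simp
    also have "\<dots> = face X m i (xs j)" using compat ij by simp
    also have "\<dots> = act p c (degen_iter X p v)"
      unfolding c_def using face_act_degen_iter[OF _ _ v] a ij m by simp
    finally have "act p (inv\<^bsub>grp p\<^esub> c \<otimes>\<^bsub>grp p\<^esub> c') (degen_iter X p v) = degen_iter X p v"
      using act_mult act_inv_act c v_n by simp
    then have "inv\<^bsub>grp p\<^esub> c \<otimes>\<^bsub>grp p\<^esub> c' \<in> ?S p"
      unfolding vertex_stabilizer_def using c by simp
    moreover have "c' = c \<otimes>\<^bsub>grp p\<^esub> (inv\<^bsub>grp p\<^esub> c \<otimes>\<^bsub>grp p\<^esub> c')"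
      using c by (simp add: grp_p.m_assoc[symmetric])
    ultimately show ?thesis unfolding c_def c'_def m by auto
  qed
  then obtain W where W: "W \<in> cells G (Suc m)"
    "\<And>i. i \<le> Suc m \<Longrightarrow> i \<noteq> k \<Longrightarrow> \<exists>h\<in>?S m. face G (Suc m) i W = a i \<otimes>\<^bsub>grp m\<^esub> h"
    using relative_horn_filler[OF simplicial_subgroup_cells_self
        simplicial_subgroup_vertex_stabilizer[OF v] k, of a] a(1)
    by blast
  have "act m (face G (Suc m) i W) (degen_iter X m v) = xs i" if "i \<le> Suc m" "i \<noteq> k" for i
    using W(2)[OF that] a[OF that] act_mult[OF _ _ v_n] unfolding vertex_stabilizer_def by auto
  then show ?thesis using W(1) by blast
qed

text \<open>The discrepancies \<open>(d\<^sub>i P)\<^sup>-\<^sup>1 d\<^sub>i g'\<close> form an exactly compatible horn in the stabiliser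
  of \<open>s w\<close>; right multiplication by the inverse of a filler \<open>h\<close> of that horn corrects \<open>g'\<close>
  without moving \<open>g' \<cdot> s w\<close>.\<close>

lemma (in simplicial_action) align_faces_modulo_stabilizer:
  assumes k: "k \<le> Suc m" and w: "w \<in> cells X 0" and P: "P \<in> cells G (Suc m)"
    and g': "g' \<in> cells G (Suc m)"
    and faces: "\<And>i. i \<le> Suc m \<Longrightarrow> i \<noteq> k \<Longrightarrow>
        act m (face G (Suc m) i g') (degen_iter X m w) = act m (face G (Suc m) i P) (degen_iter X m w)"
  obtains g where "g \<in> cells G (Suc m)"
    "act (Suc m) g (degen_iter X (Suc m) w) = act (Suc m) g' (degen_iter X (Suc m) w)"
    "\<And>i. i \<le> Suc m \<Longrightarrow> i \<noteq> k \<Longrightarrow> face G (Suc m) i g = face G (Suc m) i P"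
proof -
  interpret grp_m: group "grp m" using is_group .
  let ?S = "vertex_stabilizer G act X w"
  have w_n: "degen_iter X n w \<in> cells X n" for n using degen_iter_closed[OF sset_X w] .
  define a where "a i = inv\<^bsub>grp m\<^esub> face G (Suc m) i P \<otimes>\<^bsub>grp m\<^esub> face G (Suc m) i g'" for i
  have a_S: "a i \<in> ?S m" if i: "i \<le> Suc m" "i \<noteq> k" for i
    using faces[OF i] act_mult act_inv_act face_closed i P g'(1) w_n
    unfolding vertex_stabilizer_def a_def by simp
  have "\<exists>h\<in>{\<one>\<^bsub>grp (m - 1)\<^esub>}. face G m (j - 1) (a i) = face G m i (a j) \<otimes>\<^bsub>grp (m - 1)\<^esub> h"
    if ij: "i < j" "j \<le> Suc m" "i \<noteq> k" "j \<noteq> k" for i j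
  proof -
    obtain p where m: "m = Suc p" using ij k by (cases m) auto
    interpret grp_p: group "grp p" using is_group .
    have "face G m (j - 1) (a i) = face G m i (a j)"
      unfolding a_def m using ij m face_mult face_inv face_closed P g'
        sset_face_face[OF is_sset, of i j p P] sset_face_face[OF is_sset, of i j p g'] by simp
    then show ?thesis using face_closed P g' ij m unfolding a_def by simp
  qed
  then obtain h where h: "h \<in> ?S (Suc m)"
    "\<And>i. i \<le> Suc m \<Longrightarrow> i \<noteq> k \<Longrightarrow> face G (Suc m) i h = a i"
    using relative_horn_filler[OF simplicial_subgroup_vertex_stabilizer[OF w]
        simplicial_subgroup_trivial k, of a] a_S
      simplicial_subgroup_cells[OF simplicial_subgroup_vertex_stabilizer[OF w]]
    by fastforce
  define g where "g = g' \<otimes>\<^bsub>grp (Suc m)\<^esub> inv\<^bsub>grp (Suc m)\<^esub> h"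
  have h_cells: "h \<in> cells G (Suc m)" using h(1) unfolding vertex_stabilizer_def by simp
  have "act (Suc m) (inv\<^bsub>grp (Suc m)\<^esub> h) (degen_iter X (Suc m) w) = degen_iter X (Suc m) w"
    using act_inv_act[OF h_cells w_n] h(1) unfolding vertex_stabilizer_def by simp
  then have "act (Suc m) g (degen_iter X (Suc m) w) = act (Suc m) g' (degen_iter X (Suc m) w)"
    unfolding g_def using g' act_mult h_cells w_n[of "Suc m"] by simp
  moreover have "g \<in> cells G (Suc m)" unfolding g_def using g'(1) h_cells by simp
  moreover have "face G (Suc m) i g = face G (Suc m) i P" if i: "i \<le> Suc m" "i \<noteq> k" for i
    unfolding g_def using face_mult face_inv i g'(1) h_cells h(2)[OF i] face_closed P
    by (simp add: a_def grp_m.inv_mult_group grp_m.m_assoc[symmetric])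
  ultimately show ?thesis using that by blast
qed

locale discrete_action = simplicial_action +
  assumes discrete: "orbit_space_discrete G X act"
begin

lemma orbit_degen_iter_some:
  assumes "v \<in> cells X 0"
  shows "orbit G act n (degen_iter X n (SOME x. x \<in> orbit G act 0 v)) =
    orbit G act n (degen_iter X n v)"
  using orbit_degen_iter_eq[OF someI[of "\<lambda>x. x \<in> orbit G act 0 v", OF mem_orbit_self[OF assms]]
      assms] .

lemma orbit_of_degen_iter:
  assumes "z \<in> cells X n"
  obtains v where "v \<in> cells X 0" "z \<in> orbit G act n (degen_iter X n v)"
proof -
  have "orbit G act n z \<in> orbits G X act n"
    using assms unfolding orbits_def by blast
  then have "orbit G act n z \<in>
      (\<lambda>Orb. orbit G act n (degen_iter X n (SOME x. x \<in> Orb))) ` orbits G X act 0"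
    using discrete unfolding orbit_space_discrete_def bij_betw_def by blast
  then obtain v where "v \<in> cells X 0" "orbit G act n z = orbit G act n (degen_iter X n v)"
    unfolding orbits_def using orbit_degen_iter_some by auto
  then show ?thesis using that mem_orbit_self[OF assms] by blast
qed

lemma orbit_degen_iter_vertex:
  assumes "v \<in> cells X 0" "w \<in> cells X 0" "degen_iter X n w \<in> orbit G act n (degen_iter X n v)"
  shows "w \<in> orbit G act 0 v"
proof -
  have "orbit G act n (degen_iter X n (SOME x. x \<in> orbit G act 0 w)) =
      orbit G act n (degen_iter X n (SOME x. x \<in> orbit G act 0 v))"
    using orbit_degen_iter_some assms orbit_eq degen_iter_closed[OF sset_X] by simp
  moreover have "orbit G act 0 w \<in> orbits G X act 0" "orbit G act 0 v \<in> orbits G X act 0"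
    using assms(1,2) unfolding orbits_def by blast+
  ultimately have "orbit G act 0 w = orbit G act 0 v"
    using discrete unfolding orbit_space_discrete_def bij_betw_def by (metis inj_onD)
  then show ?thesis using mem_orbit_self[OF assms(2)] by simp
qed

lemma orbit_of_face:
  assumes "z \<in> cells X (Suc p)" "i \<le> Suc p" "v \<in> cells X 0"
    and "face X (Suc p) i z \<in> orbit G act p (degen_iter X p v)"
  shows "z \<in> orbit G act (Suc p) (degen_iter X (Suc p) v)"
proof -
  obtain u where u: "u \<in> cells X 0" "z \<in> orbit G act (Suc p) (degen_iter X (Suc p) u)"
    using orbit_of_degen_iter[OF assms(1)] .
  have "face X (Suc p) i z \<in> orbit G act p (degen_iter X p u)"
    using face_orbit_degen_iter[OF u(2) assms(2) u(1)] .
  then have "orbit G act p (degen_iter X p u) = orbit G act p (degen_iter X p v)"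
    using orbit_eq[OF _ degen_iter_closed[OF sset_X u(1)]]
      orbit_eq[OF assms(4) degen_iter_closed[OF sset_X assms(3)]]
    by simp
  then have "degen_iter X p u \<in> orbit G act p (degen_iter X p v)"
    using mem_orbit_self[OF degen_iter_closed[OF sset_X u(1), of p]] by simp
  then have "u \<in> orbit G act 0 v"
    by (rule orbit_degen_iter_vertex[OF assms(3) u(1)])
  then show ?thesis
    using u(2) orbit_degen_iter_eq[OF _ assms(3), of u "Suc p"] by (simp del: degen_iter.simps)
qed

lemma horn_in_one_orbit:
  assumes k: "k \<le> Suc m" and horn: "\<And>i. i \<le> Suc m \<Longrightarrow> i \<noteq> k \<Longrightarrow> xs i \<in> cells X m"
    and compat: "\<And>i j. i < j \<Longrightarrow> j \<le> Suc m \<Longrightarrow> i \<noteq> k \<Longrightarrow> j \<noteq> k \<Longrightarrow>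
        face X m i (xs j) = face X m (j - 1) (xs i)"
  obtains v where "v \<in> cells X 0" "\<And>i. i \<le> Suc m \<Longrightarrow> i \<noteq> k \<Longrightarrow> xs i \<in> orbit G act m (degen_iter X m v)"
proof -
  define j where "j = (if k = 0 then 1 else (0::nat))"
  have j: "j \<le> Suc m" "j \<noteq> k" "j \<le> 1" "\<And>i. i \<noteq> k \<Longrightarrow> i \<noteq> j \<Longrightarrow> j < i"
    unfolding j_def by auto
  obtain v where v: "v \<in> cells X 0" "xs j \<in> orbit G act m (degen_iter X m v)"
    using orbit_of_degen_iter[OF horn[OF j(1,2)]] .
  have "xs i \<in> orbit G act m (degen_iter X m v)" if i: "i \<le> Suc m" "i \<noteq> k" "i \<noteq> j" for i
  proof -
    obtain p where m: "m = Suc p" using i j k by (cases m) (auto simp: le_Suc_eq)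
    have "face X m j (xs i) = face X m (i - 1) (xs j)" using compat[OF j(4)] i j by simp
    also have "\<dots> \<in> orbit G act p (degen_iter X p v)"
      using face_orbit_degen_iter v i m by simp
    finally show ?thesis
      using orbit_of_face[of "xs i" p j v] horn[OF i(1,2)] j v(1) unfolding m
      by (simp del: degen_iter.simps)
  qed
  then show ?thesis using that v by blast
qed

lemma horn_lift_over_vertex:
  assumes k: "k \<le> Suc m" and horn: "\<And>i. i \<le> Suc m \<Longrightarrow> i \<noteq> k \<Longrightarrow> xs i \<in> cells X m"
    and compat: "\<And>i j. i < j \<Longrightarrow> j \<le> Suc m \<Longrightarrow> i \<noteq> k \<Longrightarrow> j \<noteq> k \<Longrightarrow>
        face X m i (xs j) = face X m (j - 1) (xs i)"
  obtains v W where "v \<in> cells X 0" "W \<in> cells G (Suc m)"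
    "\<And>i. i \<le> Suc m \<Longrightarrow> i \<noteq> k \<Longrightarrow> act m (face G (Suc m) i W) (degen_iter X m v) = xs i"
proof -
  obtain v where "v \<in> cells X 0" "\<And>i. i \<le> Suc m \<Longrightarrow> i \<noteq> k \<Longrightarrow> xs i \<in> orbit G act m (degen_iter X m v)"
    using horn_in_one_orbit[of k m xs] k horn compat by blast
  then show ?thesis using horn_lift_to_group[of k m v xs] k compat that by blast
qed

lemma extend_horn_representation:
  assumes k: "k \<le> Suc m" and w: "w \<in> cells X 0" and P: "P \<in> cells G (Suc m)"
    and y: "y \<in> cells X (Suc m)"
    and faces: "\<And>i. i \<le> Suc m \<Longrightarrow> i \<noteq> k \<Longrightarrow>
        face X (Suc m) i y = act m (face G (Suc m) i P) (degen_iter X m w)"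
  obtains g where "g \<in> cells G (Suc m)" "act (Suc m) g (degen_iter X (Suc m) w) = y"
    "\<And>i. i \<le> Suc m \<Longrightarrow> i \<noteq> k \<Longrightarrow> face G (Suc m) i g = face G (Suc m) i P"
proof -
  define l where "l = (if k = 0 then 1 else (0::nat))"
  have l: "l \<le> Suc m" "l \<noteq> k" unfolding l_def by auto
  have "face X (Suc m) l y \<in> orbit G act m (degen_iter X m w)"
    unfolding faces[OF l] orbit_def using face_closed[OF l(1) P] by blast
  then obtain g' where g': "g' \<in> cells G (Suc m)" "y = act (Suc m) g' (degen_iter X (Suc m) w)"
    using orbit_of_face[OF y l(1) w] unfolding orbit_def by blast
  have "act m (face G (Suc m) i g') (degen_iter X m w) = act m (face G (Suc m) i P) (degen_iter X m w)"
    if "i \<le> Suc m" "i \<noteq> k" for i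
    using face_act_degen_iter[OF that(1) g'(1) w] g'(2) faces[OF that] by simp
  then show ?thesis using align_faces_modulo_stabilizer[OF k w P g'(1)] g'(2) that by metis
qed

end

lemma kan_fibrationI:
  assumes "smap X Y f"
    and "\<And>m k xs y. k \<le> Suc m \<Longrightarrow> (\<And>i. i \<le> Suc m \<Longrightarrow> i \<noteq> k \<Longrightarrow> xs i \<in> cells X m) \<Longrightarrow>
      (\<And>i j. i < j \<Longrightarrow> j \<le> Suc m \<Longrightarrow> i \<noteq> k \<Longrightarrow> j \<noteq> k \<Longrightarrow>
        face X m i (xs j) = face X m (j - 1) (xs i)) \<Longrightarrow>
      y \<in> cells Y (Suc m) \<Longrightarrow> (\<And>i. i \<le> Suc m \<Longrightarrow> i \<noteq> k \<Longrightarrow> face Y (Suc m) i y = f m (xs i)) \<Longrightarrow>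
      \<exists>x\<in>cells X (Suc m). f (Suc m) x = y \<and> (\<forall>i\<le>Suc m. i \<noteq> k \<longrightarrow> face X (Suc m) i x = xs i)"
  shows "kan_fibration X Y f"
  unfolding kan_fibration_def
proof (intro conjI allI impI)
  fix n k xs y
  assume "1 \<le> n \<and> k \<le> n \<and> (\<forall>i\<le>n. i \<noteq> k \<longrightarrow> xs i \<in> cells X (n - 1)) \<and>
    (\<forall>i j. i < j \<and> j \<le> n \<and> i \<noteq> k \<and> j \<noteq> k \<longrightarrow> face X (n - 1) i (xs j) = face X (n - 1) (j - 1) (xs i)) \<and>
    y \<in> cells Y n \<and> (\<forall>i\<le>n. i \<noteq> k \<longrightarrow> face Y n i y = f (n - 1) (xs i))"
  moreover obtain m where "n = Suc m" using calculation by (cases n) auto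
  ultimately show "\<exists>x\<in>cells X n. f n x = y \<and> (\<forall>i\<le>n. i \<noteq> k \<longrightarrow> face X n i x = xs i)"
    using assms(2)[of k m xs y] by simp
qed (fact assms(1))

lemma kan_fibrationD:
  assumes "kan_fibration X Y f" "k \<le> Suc m" "\<And>i. i \<le> Suc m \<Longrightarrow> i \<noteq> k \<Longrightarrow> xs i \<in> cells X m"
    "\<And>i j. i < j \<Longrightarrow> j \<le> Suc m \<Longrightarrow> i \<noteq> k \<Longrightarrow> j \<noteq> k \<Longrightarrow>
      face X m i (xs j) = face X m (j - 1) (xs i)"
    "y \<in> cells Y (Suc m)" "\<And>i. i \<le> Suc m \<Longrightarrow> i \<noteq> k \<Longrightarrow> face Y (Suc m) i y = f m (xs i)"
  obtains x where "x \<in> cells X (Suc m)" "f (Suc m) x = y"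
    "\<And>i. i \<le> Suc m \<Longrightarrow> i \<noteq> k \<Longrightarrow> face X (Suc m) i x = xs i"
  using assms(1)[unfolded kan_fibration_def, THEN conjunct2, rule_format, of "Suc m" k xs y] assms(2-6)
  by auto

lemma (in simplicial_action) equivariant_act_degen_iter:
  assumes "smap X X' f"
    and "\<forall>n g x. g \<in> cells G n \<and> x \<in> cells X n \<longrightarrow> f n (act n g x) = act' n (\<phi> n g) (f n x)"
    and "g \<in> cells G n" "v \<in> cells X 0"
  shows "f n (act n g (degen_iter X n v)) = act' n (\<phi> n g) (degen_iter X' n (f 0 v))"
  using assms(2-4) smap_degen_iter[OF assms(1) sset_X] degen_iter_closed[OF sset_X] by simp

theorem proposition4p4:
  fixes G :: "'g sset" and grp :: "nat \<Rightarrow> 'g monoid"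
    and X :: "'a sset" and act :: "nat \<Rightarrow> 'g \<Rightarrow> 'a \<Rightarrow> 'a"
    and G' :: "'h sset" and grp' :: "nat \<Rightarrow> 'h monoid"
    and X' :: "'b sset" and act' :: "nat \<Rightarrow> 'h \<Rightarrow> 'b \<Rightarrow> 'b"
    and \<phi> :: "nat \<Rightarrow> 'g \<Rightarrow> 'h" and f :: "nat \<Rightarrow> 'a \<Rightarrow> 'b"
  assumes "saction G grp X act"
    and "saction G' grp' X' act'"
    and "orbit_space_discrete G X act"
    and "orbit_space_discrete G' X' act'"
    and "sgroup_hom G grp G' grp' \<phi>"
    and "smap X X' f"
    and "\<forall>n g x. g \<in> cells G n \<and> x \<in> cells X n \<longrightarrow> f n (act n g x) = act' n (\<phi> n g) (f n x)"
    and "kan_fibration G G' \<phi>"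
  shows "kan_fibration X X' f"
proof (rule kan_fibrationI[OF assms(6)])
  interpret X: discrete_action G grp X act using assms(1,3) by unfold_locales
  interpret X': discrete_action G' grp' X' act' using assms(2,4) by unfold_locales
  have \<phi>: "smap G G' \<phi>" using assms(5) unfolding sgroup_hom_def by blast
  fix m k xs y
  assume k: "k \<le> Suc m" and xs: "\<And>i. i \<le> Suc m \<Longrightarrow> i \<noteq> k \<Longrightarrow> xs i \<in> cells X m"
    and compat: "\<And>i j. i < j \<Longrightarrow> j \<le> Suc m \<Longrightarrow> i \<noteq> k \<Longrightarrow> j \<noteq> k \<Longrightarrow>
      face X m i (xs j) = face X m (j - 1) (xs i)"
    and y: "y \<in> cells X' (Suc m)"
    and y_faces: "\<And>i. i \<le> Suc m \<Longrightarrow> i \<noteq> k \<Longrightarrow> face X' (Suc m) i y = f m (xs i)"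
  obtain v W where v: "v \<in> cells X 0" and W: "W \<in> cells G (Suc m)"
    "\<And>i. i \<le> Suc m \<Longrightarrow> i \<noteq> k \<Longrightarrow> act m (face G (Suc m) i W) (degen_iter X m v) = xs i"
    using X.horn_lift_over_vertex[of k m xs] k xs compat by blast
  note f_act = X.equivariant_act_degen_iter[where act' = act' and \<phi> = \<phi>, OF assms(6,7)]
  have y_faces':
    "face X' (Suc m) i y = act' m (face G' (Suc m) i (\<phi> (Suc m) W)) (degen_iter X' m (f 0 v))"
    if i: "i \<le> Suc m" "i \<noteq> k" for i
    using y_faces[OF i] W(2)[OF i] f_act[OF X.face_closed[OF i(1) W(1)] v] smap_face[OF \<phi> i(1) W(1)]
    by simp
  obtain g' where g': "g' \<in> cells G' (Suc m)" "act' (Suc m) g' (degen_iter X' (Suc m) (f 0 v)) = y"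
    "\<And>i. i \<le> Suc m \<Longrightarrow> i \<noteq> k \<Longrightarrow> face G' (Suc m) i g' = face G' (Suc m) i (\<phi> (Suc m) W)"
    using X'.extend_horn_representation[OF k smap_cells[OF assms(6) v] smap_cells[OF \<phi> W(1)] y
        y_faces']
    by blast
  obtain g where g: "g \<in> cells G (Suc m)" "\<phi> (Suc m) g = g'"
    "\<And>i. i \<le> Suc m \<Longrightarrow> i \<noteq> k \<Longrightarrow> face G (Suc m) i g = face G (Suc m) i W"
  proof (rule kan_fibrationD[OF assms(8) k _ _ g'(1)])
    show "face G' (Suc m) i g' = \<phi> m (face G (Suc m) i W)" if "i \<le> Suc m" "i \<noteq> k" for i
      using g'(3)[OF that] smap_face[OF \<phi> that(1) W(1)] by simp
  qed (use X.face_closed W(1) sset_faces_compatible[OF X.is_sset W(1) k] in auto)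
  have "act m (face G (Suc m) i g) (degen_iter X m v) = xs i" if "i \<le> Suc m" "i \<noteq> k" for i
    using g(3)[OF that] W(2)[OF that] by simp
  then show "\<exists>x\<in>cells X (Suc m). f (Suc m) x = y \<and> (\<forall>i\<le>Suc m. i \<noteq> k \<longrightarrow> face X (Suc m) i x = xs i)"
    using X.act_closed[OF g(1) degen_iter_closed[OF X.sset_X v]] f_act[OF g(1) v] g(2) g'(2)
      X.face_act_degen_iter[OF _ g(1) v] by auto
qed

end
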